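(* Let $p\in[0,1]$, $\tau\in(0,1)$ and $\sigma>0$. Let $(\mathbf{a}_t)_{t\in\mathbb{Z}\setminus\{0\}}$ be i.i.d. random variables with $\Pr\{\mathbf{a}_t=+1\}=p$, $\Pr\{\mathbf{a}_t=-1\}=1-p$, let $g=\operatorname{sinc}$ and let $\mathbf{I}=\sum_{t\in\mathbb{Z}\setminus\{0\}}\mathbf{a}_t\,g(t-\tau)$ (almost surely convergent). Let $\mu=\mathbb{E}[\mathbf{I}]$ and $\mu_j=\mathbb{E}[(\mathbf{I}-\mu)^j]$ for $j\ge 0$ (so $\mu_0=1$). Then \[ \mathbb{E}\!\left[Q\!\left(\frac{g(\tau)-\mathbf{I}}{\sigma}\right)\right] =\frac12-\frac{1}{\sqrt{2\pi}\,\sigma}\sum_{n=0}^{\infty}\sum_{k=0}^{2n+1}\sum_{j=0}^{k} \frac{(2n-1)!!\,g(\tau)^{2n+1-k}(-1)^{n+k}\,\mu_j\,\mu^{k-j}}{\sigma^{2n}\,(2n+1-k)!\,j!\,(k-j)!}, \] \[ \mathbb{E}\!\left[Q\!\left(\frac{g(\tau)+\mathbf{I}}{\sigma}\right)\right] =\frac12-\frac{1}{\sqrt{2\pi}\,\sigma}\sum_{n=0}^{\infty}\sum_{k=0}^{2n+1}\sum_{j=0}^{k} \frac{(2n-1)!!\,g(\tau)^{2n+1-k}(-1)^{n}\,\mu_j\,\mu^{k-j}}{\sigma^{2n}\,(2n+1-k)!\,j!\,(k-j)!}. \]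
   Context: $\operatorname{sinc}(x)=\frac{\sin(\pi x)}{\pi x}$ for $x\ne0$, $\operatorname{sinc}(0)=1$. $Q(x)=\frac{1}{\sqrt{2\pi}}\int_x^\infty e^{-t^2/2}\,dt$ is the Gaussian tail function. The double factorial satisfies $(2n-1)!!=1\cdot3\cdots(2n-1)$ for $n\ge1$ and $(-1)!!=1$. *)

theory Defs
  imports "HOL-Probability.Probability"
begin

text \<open>Normalized sinc: sin(pi x)/(pi x), value 1 at 0.
  (Named nsinc to avoid clash with the unnormalized sinc of HOL-Probability.)\<close>
definition nsinc :: "real \<Rightarrow> real" where
  "nsinc x = (if x = 0 then 1 else sin (pi * x) / (pi * x))"

definition gaussQ :: "real \<Rightarrow> real" where
  "gaussQ x = (1 / sqrt (2 * pi)) * (LBINT t:{x..}. exp (- (t ^ 2) / 2))"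

text \<open>odd_dfact n = (2n-1)!! = 1*3*...*(2n-1), with odd_dfact 0 = (-1)!! = 1.\<close>
definition odd_dfact :: "nat \<Rightarrow> nat" where
  "odd_dfact n = (\<Prod>i<n. 2 * i + 1)"

text \<open>The interference I = sum over t in Z-{0} of a_t g(t - tau), taken as the limit
  of the symmetric partial sums over {-N..N}-{0}.\<close>
definition interf :: "(int \<Rightarrow> 'a \<Rightarrow> real) \<Rightarrow> real \<Rightarrow> 'a \<Rightarrow> real" where
  "interf a \<tau> \<omega> = lim (\<lambda>N::nat. \<Sum>t\<in>{- int N..int N} - {0}. a t \<omega> * nsinc (real_of_int t - \<tau>))"

end

(*
  Integrating the exponential series of exp (-t^2/2) termwise gives
    Q x = 1/2 - (2 pi)^(-1/2) * sum_n (-1)^n x^(2n+1) / (2^n n! (2n+1)),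
  with partial sums bounded by exp (x^2); note 1 / (2^n n! (2n+1)) = (2n-1)!! / (2n+1)!.
  The interference I is sub-Gaussian.  Pairing t with -t, the mean of the block
  N < |t| <= K of the series is O(1/N), since g(n - tau) + g(-n - tau) = O(1/n^2), and
  Hoeffding's inequality gives its fluctuation Gaussian tails of variance O(1/N).
  Along the blocks [8^k, 8^(k+1)] Borel-Cantelli yields almost sure convergence of the
  symmetric partial sums, and Fatou's lemma yields integrability of exp (l I^2) for all l.
  Hence dominated convergence exchanges expectation and series, and the binomial
  expansion of (g(tau) -+ I)^(2n+1) around mu = E I produces the central moments mu_j.
*)
theory Submission
  imports Defs "HOL-Real_Asymp.Real_Asymp"
begin

section \<open>The Gaussian tail as a power series\<close>

lemma exp_sums: "(\<lambda>n. x ^ n / fact n) sums exp (x::real)"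
  using exp_converges[of x] by (simp add: divide_inverse mult.commute)

lemma abs_le_one_plus_half_sq: "\<bar>x::real\<bar> \<le> 1 + x\<^sup>2 / 2"
  using sum_squares_ge_zero[of "\<bar>x\<bar> - 1" 0] by (simp add: power2_eq_square algebra_simps)

lemma square_add_le: "((x::real) + y)\<^sup>2 \<le> 2 * x\<^sup>2 + 2 * y\<^sup>2"
  using sum_squares_ge_zero[of "x - y" 0] by (simp add: power2_eq_square algebra_simps)

definition gauss_coeff :: "nat \<Rightarrow> real" where
  "gauss_coeff n = (-1) ^ n / (2 ^ n * fact n * (2 * n + 1))"

(* The antiderivative of exp (-t^2/2) vanishing at 0, see integral_gauss_Icc. *)
definition gauss_primitive :: "real \<Rightarrow> real" where
  "gauss_primitive x = (\<Sum>n. gauss_coeff n * x ^ (2 * n + 1))"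

lemma odd_dfact_mult_fact: "odd_dfact n * (2 ^ n * fact n) = fact (2 * n)"
proof (induction n)
  case (Suc n)
  have "odd_dfact (Suc n) = odd_dfact n * (2 * n + 1)"
    by (simp add: odd_dfact_def)
  then have "odd_dfact (Suc n) * (2 ^ Suc n * fact (Suc n)) = odd_dfact n * (2 ^ n * fact n) * ((2 * n + 1) * (2 * n + 2))"
    by (simp add: algebra_simps)
  also have "\<dots> = fact (2 * n) * ((2 * n + 1) * (2 * n + 2))"
    by (simp only: Suc.IH)
  also have "\<dots> = fact (2 * Suc n)"
    by (simp add: algebra_simps)
  finally show ?case .
qed (simp add: odd_dfact_def)

lemma gauss_coeff_odd_dfact: "gauss_coeff n = (-1) ^ n * real (odd_dfact n) / fact (2 * n + 1)"
proof -
  have "(fact (2 * n) :: real) = real (odd_dfact n) * ((2::real) ^ n * fact n)"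
    by (metis odd_dfact_mult_fact of_nat_fact of_nat_mult of_nat_numeral of_nat_power)
  then have fact_odd: "(fact (2 * n + 1) :: real) = real (odd_dfact n) * (2 ^ n * fact n * (2 * real n + 1))"
    by (simp add: algebra_simps)
  have "real (odd_dfact n) \<noteq> 0"
    by (simp add: odd_dfact_def)
  then show ?thesis
    unfolding gauss_coeff_def fact_odd
    by (metis mult.commute mult_divide_mult_cancel_left)
qed

lemma abs_gauss_coeff_term_le: "\<bar>gauss_coeff n * x ^ (2 * n + 1)\<bar> \<le> \<bar>x\<bar> * ((x\<^sup>2 / 2) ^ n / fact n)"
proof -
  have "\<bar>gauss_coeff n * x ^ (2 * n + 1)\<bar> = \<bar>x\<bar> * ((x\<^sup>2 / 2) ^ n / fact n) / (2 * n + 1)"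
    by (simp add: gauss_coeff_def abs_mult power_abs power_mult power_divide)
  also have "\<dots> \<le> \<bar>x\<bar> * ((x\<^sup>2 / 2) ^ n / fact n)"
    using divide_left_mono[of 1 "2 * n + 1" "\<bar>x\<bar> * ((x\<^sup>2 / 2) ^ n / fact n)"] by simp
  finally show ?thesis .
qed

lemma summable_abs_gauss_series: "summable (\<lambda>n. \<bar>gauss_coeff n * x ^ (2 * n + 1)\<bar>)"
  using summable_mult[OF sums_summable[OF exp_sums[of "x\<^sup>2 / 2"]], of "\<bar>x\<bar>"]
  by (rule summable_comparison_test') (simp only: real_norm_def abs_abs abs_gauss_coeff_term_le)

lemma summable_gauss_series: "summable (\<lambda>n. gauss_coeff n * x ^ (2 * n + 1))"
  by (rule summable_rabs_cancel[OF summable_abs_gauss_series])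

lemma suminf_abs_gauss_series_le: "(\<Sum>n. \<bar>gauss_coeff n * x ^ (2 * n + 1)\<bar>) \<le> exp (x\<^sup>2)"
proof -
  have "(\<Sum>n. \<bar>gauss_coeff n * x ^ (2 * n + 1)\<bar>) \<le> \<bar>x\<bar> * exp (x\<^sup>2 / 2)"
    using suminf_le[OF abs_gauss_coeff_term_le summable_abs_gauss_series
        sums_summable[OF sums_mult[OF exp_sums]]] sums_unique[OF sums_mult[OF exp_sums]]
    by metis
  also have "\<dots> \<le> exp (x\<^sup>2 / 2) * exp (x\<^sup>2 / 2)"
    using order_trans[OF abs_le_one_plus_half_sq exp_ge_add_one_self] by (intro mult_right_mono) auto
  finally show ?thesis
    by (simp flip: exp_add)
qed

lemma abs_gauss_partial_sum_le: "\<bar>\<Sum>n<N. gauss_coeff n * x ^ (2 * n + 1)\<bar> \<le> exp (x\<^sup>2)"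
proof -
  have "\<bar>\<Sum>n<N. gauss_coeff n * x ^ (2 * n + 1)\<bar> \<le> (\<Sum>n<N. \<bar>gauss_coeff n * x ^ (2 * n + 1)\<bar>)"
    by (rule sum_abs)
  also have "\<dots> \<le> (\<Sum>n. \<bar>gauss_coeff n * x ^ (2 * n + 1)\<bar>)"
    by (rule sum_le_suminf[OF summable_abs_gauss_series]) auto
  also have "\<dots> \<le> exp (x\<^sup>2)"
    by (rule suminf_abs_gauss_series_le)
  finally show ?thesis .
qed

lemma exp_neg_half_sq_sums:
  "(\<lambda>n. (-1) ^ n / (2 ^ n * fact n) * t ^ (2 * n)) sums exp (- ((t::real)\<^sup>2) / 2)"
proof -
  have "(- (t\<^sup>2) / 2) ^ n / fact n = (-1) ^ n / (2 ^ n * fact n) * t ^ (2 * n)" for n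
    by (simp add: power_divide power_mult power_minus')
  then show ?thesis
    using exp_sums[of "- (t\<^sup>2) / 2"] by simp
qed

lemma gauss_primitive_0 [simp]: "gauss_primitive 0 = 0"
  by (simp add: gauss_primitive_def)

lemma integral_gauss_term_Icc:
  assumes "a \<le> b"
  shows "integral\<^sup>L lborel (\<lambda>t. (-1) ^ n / (2 ^ n * fact n) * t ^ (2 * n) * indicator {a..b} t)
    = gauss_coeff n * b ^ (2 * n + 1) - gauss_coeff n * a ^ (2 * n + 1)"
proof -
  have "((\<lambda>t. gauss_coeff n * t ^ (2 * n + 1)) has_real_derivative
      gauss_coeff n * (real (2 * n + 1) * x ^ (2 * n))) (at x within {a..b})" for x
    by (intro derivative_eq_intros) auto
  moreover have "gauss_coeff n * (real (2 * n + 1) * x ^ (2 * n)) = (-1) ^ n / (2 ^ n * fact n) * x ^ (2 * n)" for x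
    by (simp add: gauss_coeff_def add.commute)
  ultimately have "integral\<^sup>L lborel (\<lambda>t. indicator {a..b} t *\<^sub>R ((-1) ^ n / (2 ^ n * fact n) * t ^ (2 * n)))
      = gauss_coeff n * b ^ (2 * n + 1) - gauss_coeff n * a ^ (2 * n + 1)"
    by (intro integral_FTC_atLeastAtMost[OF assms] continuous_intros)
       (simp_all add: has_real_derivative_iff_has_vector_derivative)
  then show ?thesis
    by (simp add: mult.commute)
qed

lemma abs_gauss_term_le:
  fixes a b t :: real
  assumes "t \<in> {a..b}"
  shows "\<bar>(-1) ^ n / (2 ^ n * fact n) * t ^ (2 * n)\<bar> \<le> ((a\<^sup>2 + b\<^sup>2) / 2) ^ n / fact n"
proof -
  have "\<bar>t\<bar> \<le> \<bar>a\<bar> \<or> \<bar>t\<bar> \<le> \<bar>b\<bar>"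
    using assms by (auto simp: abs_if)
  then have "t\<^sup>2 \<le> a\<^sup>2 + b\<^sup>2"
    by (auto simp: abs_le_square_iff intro: add_increasing add_increasing2)
  then have "(t\<^sup>2 / 2) ^ n / fact n \<le> ((a\<^sup>2 + b\<^sup>2) / 2) ^ n / fact n"
    by (intro divide_right_mono power_mono) auto
  then show ?thesis
    by (simp add: abs_mult power_mult power_divide)
qed

lemma integral_gauss_Icc:
  assumes "a \<le> b"
  shows "(LBINT t:{a..b}. exp (- (t\<^sup>2) / 2)) = gauss_primitive b - gauss_primitive a"
proof -
  define f where "f n = (\<lambda>t. (-1) ^ n / (2 ^ n * fact n) * t ^ (2 * n) * indicator {a..b} t)" for n
  define C where "C = (a\<^sup>2 + b\<^sup>2) / 2"
  have integrable: "integrable lborel (f n)" for n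
    unfolding f_def by (rule borel_integrable_atLeastAtMost) (intro continuous_intros)
  have norm_le: "norm (f n t) \<le> C ^ n / fact n * indicator {a..b} t" for n t
    using abs_gauss_term_le[of t a b n] by (simp add: f_def C_def abs_mult indicator_def)
  have "norm (integral\<^sup>L lborel (\<lambda>t. norm (f n t))) \<le> C ^ n / fact n * (b - a)" for n
    using integral_mono[OF integrable_norm[OF integrable] _ norm_le, of n] assms
    by (simp add: integrable_mult_right integral_nonneg_AE)
  then have summable_integral: "summable (\<lambda>n. integral\<^sup>L lborel (\<lambda>t. norm (f n t)))"
    by (rule summable_comparison_test'[OF summable_mult2[OF sums_summable[OF exp_sums]]])
  have "summable (\<lambda>n. norm (f n t))" for t
    using norm_le by (intro summable_comparison_test'[OF summable_mult2[OF sums_summable[OF exp_sums]]]) simp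
  then have "integral\<^sup>L lborel (\<lambda>t. \<Sum>n. f n t) = (\<Sum>n. integral\<^sup>L lborel (f n))"
    by (intro integral_suminf integrable AE_I2 summable_integral)
  moreover have "(\<Sum>n. f n t) = indicator {a..b} t *\<^sub>R exp (- (t\<^sup>2) / 2)" for t
    unfolding f_def using sums_unique[OF sums_mult2[OF exp_neg_half_sq_sums[of t], of "indicator {a..b} t"]]
    by (simp add: mult.commute)
  ultimately have "(LBINT t:{a..b}. exp (- (t\<^sup>2) / 2))
      = (\<Sum>n. gauss_coeff n * b ^ (2 * n + 1) - gauss_coeff n * a ^ (2 * n + 1))"
    unfolding set_lebesgue_integral_def f_def integral_gauss_term_Icc[OF assms] by simp
  also have "\<dots> = gauss_primitive b - gauss_primitive a"
    unfolding gauss_primitive_def by (rule suminf_diff[OF summable_gauss_series summable_gauss_series, symmetric])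
  finally show ?thesis .
qed

lemma set_integrable_gauss: "set_integrable lborel A (\<lambda>t::real. exp (- (t\<^sup>2) / 2))"
  if "A \<in> sets borel"
proof -
  have "exp (- (t\<^sup>2) / 2) = sqrt (2 * pi) * std_normal_density t" for t
    by (simp add: std_normal_density_def)
  then have "integrable lborel (\<lambda>t::real. exp (- (t\<^sup>2) / 2))"
    by (simp add: integrable_mult_right)
  then show ?thesis
    unfolding set_integrable_def using that by (intro integrable_mult_indicator) auto
qed

lemma integral_gauss_Ici_0: "(LBINT t:{0..}. exp (- (t\<^sup>2) / 2)) = sqrt (2 * pi) / 2"
proof -
  have "(LBINT t:{0..}. exp (- (t\<^sup>2) / 2))
      = sqrt 2 * (LBINT x. indicator {0..} (sqrt 2 * x) * exp (- ((sqrt 2 * x)\<^sup>2) / 2))"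
    unfolding set_lebesgue_integral_def
    using lborel_integral_real_affine[where c = "sqrt 2" and t = 0
        and f = "\<lambda>t. indicator {0..} t *\<^sub>R exp (- (t\<^sup>2) / 2)"] by simp
  also have "(\<lambda>x. indicator {0..} (sqrt 2 * x) * exp (- ((sqrt 2 * x)\<^sup>2) / 2)) = (\<lambda>x::real. indicator {0..} x *\<^sub>R exp (- x\<^sup>2))"
    by (auto simp: fun_eq_iff indicator_def power_mult_distrib zero_le_mult_iff)
  also have "integral\<^sup>L lborel \<dots> = sqrt pi / 2"
    using gaussian_moment_0 by (rule has_bochner_integral_integral_eq)
  finally show ?thesis
    by (simp add: real_sqrt_mult)
qed

lemma integral_gauss_Ici_split:
  assumes "a \<le> b"
  shows "(LBINT t:{a..}. exp (- (t\<^sup>2) / 2))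
    = (gauss_primitive b - gauss_primitive a) + (LBINT t:{b..}. exp (- (t\<^sup>2) / 2))"
proof -
  have "AE t in lborel. \<not> (t \<in> {a..b} \<and> t \<in> {b..})"
    using AE_lborel_singleton[of b] by eventually_elim auto
  then have "(LBINT t:{a..b} \<union> {b..}. exp (- (t\<^sup>2) / 2))
      = (LBINT t:{a..b}. exp (- (t\<^sup>2) / 2)) + (LBINT t:{b..}. exp (- (t\<^sup>2) / 2))"
    by (intro set_integral_Un_AE set_integrable_gauss) auto
  moreover have "{a..b} \<union> {b..} = {a..}"
    using assms by auto
  ultimately show ?thesis
    using integral_gauss_Icc[OF assms] by simp
qed

lemma gaussQ_eq_series: "gaussQ x = 1 / 2 - gauss_primitive x / sqrt (2 * pi)"
proof -
  have "(LBINT t:{x..}. exp (- (t\<^sup>2) / 2)) = sqrt (2 * pi) / 2 - gauss_primitive x"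
    using integral_gauss_Ici_split[of x 0] integral_gauss_Ici_split[of 0 x] integral_gauss_Ici_0
    by (cases "x \<le> 0") auto
  then show ?thesis
    by (simp add: gaussQ_def field_simps)
qed

section \<open>Expectation of the Gaussian tail of an affine image\<close>

lemma abs_power_le_exp_sq: "\<bar>y::real\<bar> ^ k \<le> fact k * exp (1 + y\<^sup>2)"
proof -
  have "\<bar>y\<bar> ^ k / fact k \<le> exp \<bar>y\<bar>"
    using sum_le_suminf[OF sums_summable[OF exp_sums[of "\<bar>y\<bar>"]], of "{k}"]
      sums_unique[OF exp_sums[of "\<bar>y\<bar>"]] by simp
  also have "\<dots> \<le> exp (1 + y\<^sup>2)"
    using abs_le_one_plus_half_sq[of y] zero_le_power2[of y] by (subst exp_le_cancel_iff) linarith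
  finally show ?thesis
    by (simp add: divide_le_eq mult.commute)
qed

lemma integrable_power_of_integrable_exp_sq:
  fixes Y :: "'a \<Rightarrow> real"
  assumes [measurable]: "Y \<in> borel_measurable M" and "integrable M (\<lambda>\<omega>. exp (Y \<omega> ^ 2))"
  shows "integrable M (\<lambda>\<omega>. Y \<omega> ^ k)"
proof (rule Bochner_Integration.integrable_bound)
  show "integrable M (\<lambda>\<omega>. fact k * exp 1 * exp (Y \<omega> ^ 2))"
    using assms(2) by (intro integrable_mult_right)
  show "AE \<omega> in M. norm (Y \<omega> ^ k) \<le> norm (fact k * exp 1 * exp (Y \<omega> ^ 2))"
    using abs_power_le_exp_sq by (simp add: power_abs exp_add mult.assoc)
qed measurable

lemma (in prob_space) expectation_gaussQ_sums:
  assumes [measurable]: "Y \<in> borel_measurable M" and integrable_exp: "integrable M (\<lambda>\<omega>. exp (Y \<omega> ^ 2))"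
  shows "(\<lambda>n. gauss_coeff n * expectation (\<lambda>\<omega>. Y \<omega> ^ (2 * n + 1)))
    sums (sqrt (2 * pi) * (1 / 2 - expectation (\<lambda>\<omega>. gaussQ (Y \<omega>))))"
proof -
  define s where "s N \<omega> = (\<Sum>n<N. gauss_coeff n * Y \<omega> ^ (2 * n + 1))" for N \<omega>
  have [measurable]: "(\<lambda>\<omega>. gauss_primitive (Y \<omega>)) \<in> borel_measurable M" "s N \<in> borel_measurable M" for N
    unfolding gauss_primitive_def s_def by measurable
  have lim: "AE \<omega> in M. (\<lambda>N. s N \<omega>) \<longlonglongrightarrow> gauss_primitive (Y \<omega>)"
    unfolding s_def gauss_primitive_def by (intro AE_I2 summable_LIMSEQ summable_gauss_series)
  have bound: "AE \<omega> in M. norm (s N \<omega>) \<le> exp (Y \<omega> ^ 2)" for N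
    unfolding s_def real_norm_def by (intro AE_I2 abs_gauss_partial_sum_le)
  have integrable_primitive: "integrable M (\<lambda>\<omega>. gauss_primitive (Y \<omega>))"
    by (rule integrable_dominated_convergence[OF _ _ integrable_exp lim bound]) measurable
  have "(\<lambda>N. expectation (s N)) \<longlonglongrightarrow> expectation (\<lambda>\<omega>. gauss_primitive (Y \<omega>))"
    by (rule integral_dominated_convergence[OF _ _ integrable_exp lim bound]) measurable
  moreover have "expectation (s N) = (\<Sum>n<N. gauss_coeff n * expectation (\<lambda>\<omega>. Y \<omega> ^ (2 * n + 1)))" for N
    unfolding s_def
    using integrable_power_of_integrable_exp_sq[OF _ integrable_exp]
    by (subst Bochner_Integration.integral_sum) (auto intro!: integrable_mult_right simp del: power_Suc)
  moreover have "expectation (\<lambda>\<omega>. gaussQ (Y \<omega>)) = 1 / 2 - expectation (\<lambda>\<omega>. gauss_primitive (Y \<omega>)) / sqrt (2 * pi)"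
    unfolding gaussQ_eq_series using integrable_primitive by (simp add: prob_space)
  ultimately show ?thesis
    by (simp add: sums_def)
qed

lemma power_binomial_central:
  fixes c s x \<mu> :: real
  shows "(c + s * x) ^ m / fact m = (\<Sum>k\<le>m. \<Sum>j\<le>k.
    c ^ (m - k) * s ^ k * \<mu> ^ (k - j) / (fact (m - k) * fact j * fact (k - j)) * (x - \<mu>) ^ j)"
proof -
  have "(c + s * x) ^ m / fact m = (\<Sum>k\<le>m. of_nat (m choose k) * (s * x) ^ k * c ^ (m - k) / fact m)"
    using binomial_ring[of "s * x" c m] by (simp add: add.commute sum_divide_distrib)
  also have "\<dots> = (\<Sum>k\<le>m. c ^ (m - k) * s ^ k / (fact k * fact (m - k)) * x ^ k)"
    by (intro sum.cong refl) (simp add: binomial_fact power_mult_distrib field_simps)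
  also have "\<dots> = (\<Sum>k\<le>m. c ^ (m - k) * s ^ k / (fact k * fact (m - k)) *
      (\<Sum>j\<le>k. of_nat (k choose j) * (x - \<mu>) ^ j * \<mu> ^ (k - j)))"
    using binomial_ring[of "x - \<mu>" \<mu>] by simp
  also have "\<dots> = (\<Sum>k\<le>m. \<Sum>j\<le>k.
      c ^ (m - k) * s ^ k * \<mu> ^ (k - j) / (fact (m - k) * fact j * fact (k - j)) * (x - \<mu>) ^ j)"
    by (intro sum.cong refl) (simp add: sum_distrib_left binomial_fact field_simps)
  finally show ?thesis .
qed

lemma integral_power_binomial_central:
  fixes X :: "'a \<Rightarrow> real"
  assumes "\<And>j. integrable M (\<lambda>\<omega>. (X \<omega> - \<mu>) ^ j)"
  shows "integral\<^sup>L M (\<lambda>\<omega>. (c + s * X \<omega>) ^ m) / fact m = (\<Sum>k\<le>m. \<Sum>j\<le>k.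
    c ^ (m - k) * s ^ k * \<mu> ^ (k - j) / (fact (m - k) * fact j * fact (k - j)) * integral\<^sup>L M (\<lambda>\<omega>. (X \<omega> - \<mu>) ^ j))"
proof -
  have "integral\<^sup>L M (\<lambda>\<omega>. (c + s * X \<omega>) ^ m) / fact m = integral\<^sup>L M (\<lambda>\<omega>. (c + s * X \<omega>) ^ m / fact m)"
    by simp
  then show ?thesis
    unfolding power_binomial_central[of c s _ m \<mu>] using assms
    by (simp add: Bochner_Integration.integrable_sum del: times_divide_eq_left)
qed

lemma integrable_exp_sq_affine:
  fixes X :: "'a \<Rightarrow> real"
  assumes [measurable]: "X \<in> borel_measurable M"
    and exp_sq: "\<And>l. 0 \<le> l \<Longrightarrow> integrable M (\<lambda>\<omega>. exp (l * X \<omega> ^ 2))"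
    and "0 \<le> l"
  shows "integrable M (\<lambda>\<omega>. exp (l * (c + s * X \<omega>) ^ 2))"
proof (rule Bochner_Integration.integrable_bound)
  show "integrable M (\<lambda>\<omega>. exp (2 * l * c\<^sup>2) * exp ((2 * l * s\<^sup>2) * X \<omega> ^ 2))"
    using exp_sq[of "2 * l * s\<^sup>2"] \<open>0 \<le> l\<close> by (intro integrable_mult_right) simp
  have "(c + s * y)\<^sup>2 \<le> 2 * c\<^sup>2 + 2 * s\<^sup>2 * y\<^sup>2" for y
    using square_add_le[of c "s * y"] by (simp add: power_mult_distrib)
  then have "l * (c + s * y)\<^sup>2 \<le> 2 * l * c\<^sup>2 + 2 * l * s\<^sup>2 * y\<^sup>2" for y
    using mult_left_mono[OF _ \<open>0 \<le> l\<close>] by (fastforce simp: algebra_simps)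
  then show "AE \<omega> in M. norm (exp (l * (c + s * X \<omega>) ^ 2))
      \<le> norm (exp (2 * l * c\<^sup>2) * exp ((2 * l * s\<^sup>2) * X \<omega> ^ 2))"
    by (simp flip: exp_add)
qed measurable

lemma (in prob_space) expectation_gaussQ_affine_sums:
  fixes X :: "'a \<Rightarrow> real"
  assumes [measurable]: "X \<in> borel_measurable M"
    and exp_sq: "\<And>l. 0 \<le> l \<Longrightarrow> integrable M (\<lambda>\<omega>. exp (l * X \<omega> ^ 2))"
    and "0 < \<sigma>"
  shows "(\<lambda>n. \<Sum>k\<le>2*n+1. \<Sum>j\<le>k.
      real (odd_dfact n) * c ^ (2*n+1-k) * (-1) ^ n * s ^ k * expectation (\<lambda>\<omega>. (X \<omega> - \<mu>) ^ j) * \<mu> ^ (k-j)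
      / (\<sigma> ^ (2*n) * fact (2*n+1-k) * fact j * fact (k-j)))
    sums (sqrt (2 * pi) * \<sigma> * (1 / 2 - expectation (\<lambda>\<omega>. gaussQ ((c + s * X \<omega>) / \<sigma>))))"
proof -
  have moments: "integrable M (\<lambda>\<omega>. (X \<omega> - \<mu>) ^ j)" for j
    using integrable_exp_sq_affine[OF _ exp_sq, of 1 "- \<mu>" 1]
    by (intro integrable_power_of_integrable_exp_sq) simp_all
  have "integrable M (\<lambda>\<omega>. exp (((c + s * X \<omega>) / \<sigma>)\<^sup>2))"
    using integrable_exp_sq_affine[OF _ exp_sq, of "1 / \<sigma>\<^sup>2" c s] by (simp add: power_divide)
  then have "(\<lambda>n. \<sigma> * (gauss_coeff n * expectation (\<lambda>\<omega>. ((c + s * X \<omega>) / \<sigma>) ^ (2 * n + 1))))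
      sums (\<sigma> * (sqrt (2 * pi) * (1 / 2 - expectation (\<lambda>\<omega>. gaussQ ((c + s * X \<omega>) / \<sigma>)))))"
    by (intro sums_mult expectation_gaussQ_sums) simp_all
  moreover have "\<sigma> * (gauss_coeff n * expectation (\<lambda>\<omega>. ((c + s * X \<omega>) / \<sigma>) ^ (2 * n + 1)))
    = (\<Sum>k\<le>2*n+1. \<Sum>j\<le>k.
      real (odd_dfact n) * c ^ (2*n+1-k) * (-1) ^ n * s ^ k * expectation (\<lambda>\<omega>. (X \<omega> - \<mu>) ^ j) * \<mu> ^ (k-j)
      / (\<sigma> ^ (2*n) * fact (2*n+1-k) * fact j * fact (k-j)))" for n
  proof -
    have "\<sigma> * (gauss_coeff n * expectation (\<lambda>\<omega>. ((c + s * X \<omega>) / \<sigma>) ^ (2 * n + 1)))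
        = (-1) ^ n * real (odd_dfact n) / \<sigma> ^ (2 * n)
          * (expectation (\<lambda>\<omega>. (c + s * X \<omega>) ^ (2 * n + 1)) / fact (2 * n + 1))"
      using \<open>0 < \<sigma>\<close> by (simp add: gauss_coeff_odd_dfact power_divide mult_ac)
    also have "\<dots> = (\<Sum>k\<le>2*n+1. \<Sum>j\<le>k.
      real (odd_dfact n) * c ^ (2*n+1-k) * (-1) ^ n * s ^ k * expectation (\<lambda>\<omega>. (X \<omega> - \<mu>) ^ j) * \<mu> ^ (k-j)
      / (\<sigma> ^ (2*n) * fact (2*n+1-k) * fact j * fact (k-j)))"
      unfolding integral_power_binomial_central[OF moments] sum_distrib_left
      by (intro sum.cong refl) (simp add: field_simps)
    finally show ?thesis .
  qed
  ultimately show ?thesis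
    by (simp add: mult_ac)
qed

section \<open>The sinc interference is sub-Gaussian\<close>

lemma nsinc_shift_abs_le:
  fixes t :: int and \<tau> :: real
  assumes "0 < \<tau>" "\<tau> < 1" "2 \<le> \<bar>t\<bar>"
  shows "\<bar>nsinc (real_of_int t - \<tau>)\<bar> \<le> 1 / \<bar>real_of_int t\<bar>"
proof -
  have "\<bar>real_of_int t\<bar> \<le> 2 * \<bar>real_of_int t - \<tau>\<bar>"
    using assms by (cases "0 \<le> t") (auto simp: abs_if)
  also have "\<dots> \<le> pi * \<bar>real_of_int t - \<tau>\<bar>"
    using pi_gt3 by (intro mult_right_mono) auto
  finally have t_le: "\<bar>real_of_int t\<bar> \<le> pi * \<bar>real_of_int t - \<tau>\<bar>" .
  have "\<bar>nsinc (real_of_int t - \<tau>)\<bar> = \<bar>sin (pi * (real_of_int t - \<tau>))\<bar> / (pi * \<bar>real_of_int t - \<tau>\<bar>)"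
    using assms by (auto simp: nsinc_def abs_divide abs_mult)
  also have "\<dots> \<le> 1 / (pi * \<bar>real_of_int t - \<tau>\<bar>)"
    by (intro divide_right_mono abs_sin_le_one) simp
  also have "\<dots> \<le> 1 / \<bar>real_of_int t\<bar>"
    using t_le assms by (intro divide_left_mono) auto
  finally show ?thesis .
qed

lemma sin_pi_shift_nat:
  "sin (pi * (real n - \<tau>)) = - ((-1) ^ n * sin (pi * \<tau>))"
  "sin (pi * (real n + \<tau>)) = (-1) ^ n * sin (pi * \<tau>)"
  using sin_npi[of n] cos_npi[of n] by (simp_all add: distrib_left right_diff_distrib sin_diff sin_add mult.commute)

lemma nsinc_shift_pair_eq:
  assumes "\<tau> < real n" "0 < real n + \<tau>"
  shows "nsinc (real n - \<tau>) + nsinc (- real n - \<tau>)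
    = - ((-1) ^ n * sin (pi * \<tau>) / pi * (2 * \<tau> / ((real n)\<^sup>2 - \<tau>\<^sup>2)))"
proof -
  define r where "r = real n"
  define S where "S = (-1) ^ n * sin (pi * \<tau>)"
  have r: "0 < r - \<tau>" "0 < r + \<tau>"
    using assms by (auto simp: r_def)
  have "pi * (- r - \<tau>) = - (pi * (r + \<tau>))"
    by (simp add: algebra_simps)
  then have "nsinc (r - \<tau>) = - (S / pi) * (1 / (r - \<tau>))" "nsinc (- r - \<tau>) = S / pi * (1 / (r + \<tau>))"
    using r by (auto simp: nsinc_def S_def r_def sin_pi_shift_nat)
  then have "nsinc (r - \<tau>) + nsinc (- r - \<tau>) = S / pi * (1 / (r + \<tau>) - 1 / (r - \<tau>))"
    by (simp add: right_diff_distrib)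
  moreover have "1 / (r + \<tau>) - 1 / (r - \<tau>) = ((r - \<tau>) - (r + \<tau>)) / ((r + \<tau>) * (r - \<tau>))"
    using r by (simp add: diff_frac_eq)
  moreover have "(r - \<tau>) - (r + \<tau>) = - (2 * \<tau>)" "(r + \<tau>) * (r - \<tau>) = r\<^sup>2 - \<tau>\<^sup>2"
    by (simp_all add: power2_eq_square algebra_simps)
  ultimately show ?thesis
    unfolding S_def r_def by (simp only: minus_divide_left mult_minus_right)
qed

lemma nsinc_shift_pair_abs_le:
  assumes "0 < \<tau>" "\<tau> < 1" "2 \<le> n"
  shows "\<bar>nsinc (real n - \<tau>) + nsinc (- real n - \<tau>)\<bar> \<le> 1 / (real n)\<^sup>2"
proof -
  define r where "r = real n"
  have r: "2 \<le> r" "\<tau> < r"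
    using assms by (auto simp: r_def)
  have "\<tau>\<^sup>2 < r\<^sup>2" "4 \<le> r\<^sup>2"
    using r assms power_mono[of 2 r 2] by (auto intro: power_strict_mono)
  have "\<bar>nsinc (r - \<tau>) + nsinc (- r - \<tau>)\<bar> = \<bar>sin (pi * \<tau>)\<bar> / pi * (2 * \<tau> / (r\<^sup>2 - \<tau>\<^sup>2))"
    using nsinc_shift_pair_eq[of \<tau> n] r assms \<open>\<tau>\<^sup>2 < r\<^sup>2\<close> by (simp add: r_def abs_mult abs_divide)
  also have "\<dots> \<le> 1 / pi * (2 / (r\<^sup>2 - 1))"
    using assms \<open>\<tau>\<^sup>2 < r\<^sup>2\<close> \<open>4 \<le> r\<^sup>2\<close>
    by (intro mult_mono frac_le divide_right_mono) (auto simp: power_le_one)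
  also have "\<dots> \<le> 1 / r\<^sup>2"
  proof -
    have "2 * r\<^sup>2 \<le> pi * (r\<^sup>2 - 1)"
      using pi_gt3 mult_right_mono[of 3 pi "r\<^sup>2 - 1"] \<open>4 \<le> r\<^sup>2\<close> by simp
    then show ?thesis
      using \<open>4 \<le> r\<^sup>2\<close> by (simp add: divide_simps)
  qed
  finally show ?thesis
    by (simp add: r_def)
qed

definition annulus :: "nat \<Rightarrow> nat \<Rightarrow> int set" where
  "annulus N K = {t. int N < \<bar>t\<bar> \<and> \<bar>t\<bar> \<le> int K}"

lemma finite_annulus [simp]: "finite (annulus N K)"
  by (rule finite_subset[of _ "{- int K..int K}"]) (auto simp: annulus_def)

lemma annulus_subset: "annulus N K \<subseteq> UNIV - {0}"
  by (auto simp: annulus_def)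

lemma symmetric_interval_split:
  assumes "N \<le> K"
  shows "{- int K..int K} - {0} = ({- int N..int N} - {0}) \<union> annulus N K"
    and "({- int N..int N} - {0}) \<inter> annulus N K = {}"
  using assms by (auto simp: annulus_def)

lemma sum_annulus: "(\<Sum>t\<in>annulus N K. f t) = (\<Sum>n\<in>{N<..K}. f (int n) + f (- int n))"
proof -
  have annulus_eq: "annulus N K = int ` {N<..K} \<union> (\<lambda>n. - int n) ` {N<..K}"
  proof (intro equalityI subsetI)
    fix t assume "t \<in> annulus N K"
    then have "nat \<bar>t\<bar> \<in> {N<..K}" "t = int (nat \<bar>t\<bar>) \<or> t = - int (nat \<bar>t\<bar>)"
      by (auto simp: annulus_def)
    then show "t \<in> int ` {N<..K} \<union> (\<lambda>n. - int n) ` {N<..K}"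
      by blast
  qed (auto simp: annulus_def)
  have "(\<Sum>t\<in>annulus N K. f t) = (\<Sum>t\<in>int ` {N<..K}. f t) + (\<Sum>t\<in>(\<lambda>n. - int n) ` {N<..K}. f t)"
    unfolding annulus_eq by (rule sum.union_disjoint) auto
  also have "\<dots> = (\<Sum>n\<in>{N<..K}. f (int n)) + (\<Sum>n\<in>{N<..K}. f (- int n))"
    by (simp add: sum.reindex inj_on_def)
  finally show ?thesis
    by (simp add: sum.distrib)
qed

lemma sum_inverse_squares_le:
  assumes "1 \<le> N"
  shows "(\<Sum>n\<in>{N<..K}. 1 / (real n)\<^sup>2) \<le> 1 / real N"
proof (cases "N \<le> K")
  case True
  have "(\<Sum>n\<in>{N<..K}. 1 / (real n)\<^sup>2) \<le> 1 / real N - 1 / real K"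
    using True
  proof (induction K rule: dec_induct)
    case (step m)
    have "1 / (real (Suc m))\<^sup>2 \<le> 1 / (real m * real (Suc m))"
      using step assms by (intro divide_left_mono) (auto simp: power2_eq_square)
    also have "\<dots> = 1 / real m - 1 / real (Suc m)"
      using step assms by (simp add: field_simps)
    finally have "1 / (real (Suc m))\<^sup>2 \<le> 1 / real m - 1 / real (Suc m)" .
    moreover have "{N<..Suc m} = insert (Suc m) {N<..m}"
      using step by auto
    ultimately show ?case
      using step by simp
  qed simp
  moreover have "0 \<le> 1 / real K"
    by simp
  ultimately show ?thesis
    by linarith
qed simp

lemma sum_annulus_inverse_sq_le:
  assumes "1 \<le> N"
  shows "(\<Sum>t\<in>annulus N K. 1 / (real_of_int t)\<^sup>2) \<le> 2 / real N"
proof -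
  have "(\<Sum>t\<in>annulus N K. 1 / (real_of_int t)\<^sup>2) = 2 * (\<Sum>n\<in>{N<..K}. 1 / (real n)\<^sup>2)"
    by (simp add: sum_annulus sum_distrib_left)
  also have "\<dots> \<le> 2 / real N"
    using sum_inverse_squares_le[OF assms, of K] by simp
  finally show ?thesis .
qed

lemma abs_sum_nsinc_annulus_le:
  assumes "0 < \<tau>" "\<tau> < 1" "1 \<le> N"
  shows "\<bar>\<Sum>t\<in>annulus N K. nsinc (real_of_int t - \<tau>)\<bar> \<le> 1 / real N"
proof -
  have "\<bar>\<Sum>t\<in>annulus N K. nsinc (real_of_int t - \<tau>)\<bar>
      \<le> (\<Sum>n\<in>{N<..K}. \<bar>nsinc (real n - \<tau>) + nsinc (- real n - \<tau>)\<bar>)"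
    unfolding sum_annulus by (rule order_trans[OF sum_abs]) simp
  also have "\<dots> \<le> (\<Sum>n\<in>{N<..K}. 1 / (real n)\<^sup>2)"
    using assms by (intro sum_mono nsinc_shift_pair_abs_le) auto
  also have "\<dots> \<le> 1 / real N"
    using sum_inverse_squares_le[OF assms(3)] .
  finally show ?thesis .
qed

lemma abs_diff_geometric_blocks_chain:
  fixes f :: "nat \<Rightarrow> real" and b :: nat
  assumes "2 \<le> b" "0 \<le> c"
    and block: "\<And>k m. k0 \<le> k \<Longrightarrow> b ^ k \<le> m \<Longrightarrow> m \<le> b ^ (k + 1) \<Longrightarrow> \<bar>f m - f (b ^ k)\<bar> \<le> c / 2 ^ k"
    and "k0 \<le> k" "b ^ k \<le> m" "m \<le> b ^ (k + j + 1)"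
  shows "\<bar>f m - f (b ^ k)\<bar> \<le> 2 * c / 2 ^ k - 2 * c / 2 ^ (k + j + 1)"
  using assms(5,6)
proof (induction j arbitrary: m)
  case 0
  then show ?case
    using block[OF \<open>k0 \<le> k\<close>] by simp
next
  case (Suc j)
  show ?case
  proof (cases "m \<le> b ^ (k + j + 1)")
    case True
    have "2 * c / 2 ^ (k + Suc j + 1) \<le> 2 * c / 2 ^ (k + j + 1)"
      using \<open>0 \<le> c\<close> by (simp add: field_simps)
    with Suc.IH[OF Suc.prems(1) True] show ?thesis
      by linarith
  next
    case False
    have "\<bar>f m - f (b ^ (k + j + 1))\<bar> \<le> c / 2 ^ (k + j + 1)"
      using block[of "k + j + 1" m] \<open>k0 \<le> k\<close> False Suc.prems by simp
    moreover have "b ^ k \<le> b ^ (k + j + 1)"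
      using \<open>2 \<le> b\<close> by (intro power_increasing) auto
    then have "\<bar>f (b ^ (k + j + 1)) - f (b ^ k)\<bar> \<le> 2 * c / 2 ^ k - 2 * c / 2 ^ (k + j + 1)"
      using Suc.IH by simp
    moreover have "c / 2 ^ (k + j + 1) - 2 * c / 2 ^ (k + j + 1) = - (2 * c / 2 ^ (k + Suc j + 1))"
      by (simp add: field_simps)
    ultimately show ?thesis
      by linarith
  qed
qed

lemma abs_diff_geometric_blocks_le:
  fixes f :: "nat \<Rightarrow> real" and b :: nat
  assumes "2 \<le> b"
    and block: "\<And>k m. k0 \<le> k \<Longrightarrow> b ^ k \<le> m \<Longrightarrow> m \<le> b ^ (k + 1) \<Longrightarrow> \<bar>f m - f (b ^ k)\<bar> \<le> c / 2 ^ k"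
    and "k0 \<le> k" "b ^ k \<le> m"
  shows "\<bar>f m - f (b ^ k)\<bar> \<le> 2 * c / 2 ^ k"
proof -
  have "0 \<le> c / 2 ^ k0"
    using block[of k0 "b ^ k0"] \<open>2 \<le> b\<close> by (simp add: power_increasing)
  then have "0 \<le> c"
    by (metis le_divide_eq_1_pos zero_le_divide_iff zero_less_numeral zero_less_power not_le)
  have "m < 2 ^ m"
    by (rule less_exp)
  also have "(2::nat) ^ m \<le> b ^ m"
    using \<open>2 \<le> b\<close> by (rule power_mono) simp
  also have "\<dots> \<le> b ^ (k + m + 1)"
    using \<open>2 \<le> b\<close> by (intro power_increasing) auto
  finally have "\<bar>f m - f (b ^ k)\<bar> \<le> 2 * c / 2 ^ k - 2 * c / 2 ^ (k + m + 1)"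
    using abs_diff_geometric_blocks_chain[OF \<open>2 \<le> b\<close> \<open>0 \<le> c\<close> block \<open>k0 \<le> k\<close> \<open>b ^ k \<le> m\<close>] by simp
  moreover have "0 \<le> 2 * c / 2 ^ (k + m + 1)"
    using \<open>0 \<le> c\<close> by simp
  ultimately show ?thesis
    by linarith
qed

lemma Cauchy_of_geometric_blocks:
  fixes f :: "nat \<Rightarrow> real" and b :: nat
  assumes "2 \<le> b"
    and block: "\<And>k m. k0 \<le> k \<Longrightarrow> b ^ k \<le> m \<Longrightarrow> m \<le> b ^ (k + 1) \<Longrightarrow> \<bar>f m - f (b ^ k)\<bar> \<le> c / 2 ^ k"
  shows "Cauchy f"
proof (rule metric_CauchyI)
  fix e :: real
  assume "0 < e"
  have "(\<lambda>k. 4 * c * (1 / 2 :: real) ^ k) \<longlonglongrightarrow> 0"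
    by (intro tendsto_mult_right_zero LIMSEQ_power_zero) simp
  then have "eventually (\<lambda>k. 4 * c * (1 / 2) ^ k < e \<and> k0 \<le> k) sequentially"
    using \<open>0 < e\<close> by (intro eventually_conj order_tendstoD(2) eventually_ge_at_top)
  then obtain K where K: "4 * c / 2 ^ K < e" "k0 \<le> K"
    by (auto simp: eventually_sequentially power_divide)
  have "dist (f m) (f n) < e" if "b ^ K \<le> m" "b ^ K \<le> n" for m n
    using abs_diff_geometric_blocks_le[OF assms K(2) that(1)] abs_diff_geometric_blocks_le[OF assms K(2) that(2)] K(1)
    by (simp add: dist_real_def)
  then show "\<exists>M. \<forall>m\<ge>M. \<forall>n\<ge>M. dist (f m) (f n) < e"
    by blast
qed

lemma exp_sq_le_suminf_levels:
  fixes x l :: real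
  assumes "0 \<le> l"
  shows "ennreal (exp (l * x\<^sup>2)) \<le> (\<Sum>k. ennreal (exp (l * (real k + 1)\<^sup>2)) * indicator {y. real k \<le> \<bar>y\<bar>} x)"
proof -
  define k where "k = nat \<lfloor>\<bar>x\<bar>\<rfloor>"
  have "real k \<le> \<bar>x\<bar>" "\<bar>x\<bar> \<le> real k + 1"
    unfolding k_def by linarith+
  then have "ennreal (exp (l * x\<^sup>2)) \<le> ennreal (exp (l * (real k + 1)\<^sup>2)) * indicator {y. real k \<le> \<bar>y\<bar>} x"
    using \<open>0 \<le> l\<close> by (simp add: ennreal_leI mult_left_mono abs_le_square_iff[symmetric])
  also have "\<dots> \<le> (\<Sum>k. ennreal (exp (l * (real k + 1)\<^sup>2)) * indicator {y. real k \<le> \<bar>y\<bar>} x)"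
    using sum_le_suminf[OF summableI, where I = "{k}"] by simp
  finally show ?thesis .
qed

lemma gaussian_tail_exponent_le:
  fixes l r :: real
  assumes "0 \<le> l" "2 * l + 1 \<le> r"
  shows "l * (real k + 1)\<^sup>2 - r * (real k)\<^sup>2 \<le> 2 * l - real k"
proof -
  have "l * (real k + 1)\<^sup>2 \<le> l * (2 * (real k)\<^sup>2 + 2)"
    using \<open>0 \<le> l\<close> square_add_le[of "real k" 1] by (intro mult_left_mono) auto
  moreover have "real k \<le> (real k)\<^sup>2"
    by (cases k) (auto simp: power2_eq_square)
  moreover have "(2 * l + 1) * (real k)\<^sup>2 \<le> r * (real k)\<^sup>2"
    using assms(2) by (intro mult_right_mono) auto
  ultimately show ?thesis
    by (simp only: distrib_left distrib_right)
qed

lemma suminf_ennreal_geometric: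
  fixes c q :: real
  assumes "0 \<le> c" "0 \<le> q" "q < 1"
  shows "(\<Sum>k. ennreal (c * q ^ k)) = ennreal (c / (1 - q))"
proof -
  have "(\<lambda>k. c * q ^ k) sums (c * (1 / (1 - q)))"
    using assms by (intro sums_mult geometric_sums) simp
  then have "(\<lambda>k. ennreal (c * q ^ k)) sums ennreal (c / (1 - q))"
    using assms by (subst sums_ennreal) auto
  then show ?thesis
    by (rule sums_unique[symmetric])
qed

lemma (in prob_space) nn_integral_exp_sq_le_of_tail:
  fixes X :: "'a \<Rightarrow> real"
  assumes [measurable]: "X \<in> borel_measurable M" and "0 \<le> l" "2 * l + 1 \<le> r"
    and tail: "\<And>k::nat. prob {\<omega> \<in> space M. real k \<le> \<bar>X \<omega>\<bar>} \<le> 2 * exp (- r * (real k)\<^sup>2)"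
  shows "(\<integral>\<^sup>+\<omega>. exp (l * X \<omega> ^ 2) \<partial>M) \<le> ennreal (2 * exp (2 * l) / (1 - exp (- 1)))"
proof -
  define E where "E k = {\<omega> \<in> space M. real k \<le> \<bar>X \<omega>\<bar>}" for k :: nat
  have [measurable]: "E k \<in> sets M" for k
    unfolding E_def by measurable
  have term_le: "ennreal (exp (l * (real k + 1)\<^sup>2)) * emeasure M (E k) \<le> ennreal (2 * exp (2 * l) * exp (- 1) ^ k)"
    for k
  proof -
    have "emeasure M (E k) \<le> ennreal (2 * exp (- r * (real k)\<^sup>2))"
      using tail[of k] by (simp add: E_def emeasure_eq_measure ennreal_leI)
    then have "ennreal (exp (l * (real k + 1)\<^sup>2)) * emeasure M (E k)
        \<le> ennreal (exp (l * (real k + 1)\<^sup>2) * (2 * exp (- r * (real k)\<^sup>2)))"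
      by (simp add: ennreal_mult'' mult_left_mono)
    also have "\<dots> \<le> ennreal (2 * exp (2 * l) * exp (- 1) ^ k)"
      using gaussian_tail_exponent_le[OF assms(2,3), of k]
      by (intro ennreal_leI) (simp add: exp_of_nat_mult[symmetric] mult_exp_exp)
    finally show ?thesis .
  qed
  have "(\<integral>\<^sup>+\<omega>. exp (l * X \<omega> ^ 2) \<partial>M)
      \<le> (\<integral>\<^sup>+\<omega>. (\<Sum>k. ennreal (exp (l * (real k + 1)\<^sup>2)) * indicator (E k) \<omega>) \<partial>M)"
    using exp_sq_le_suminf_levels[OF assms(2)] by (intro nn_integral_mono) (simp add: E_def indicator_def)
  also have "\<dots> = (\<Sum>k. ennreal (exp (l * (real k + 1)\<^sup>2)) * emeasure M (E k))"
    by (simp add: nn_integral_suminf nn_integral_cmult_indicator)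
  also have "\<dots> \<le> (\<Sum>k. ennreal (2 * exp (2 * l) * exp (- 1) ^ k))"
    by (intro suminf_le term_le summableI)
  also have "\<dots> = ennreal (2 * exp (2 * l) / (1 - exp (- 1)))"
    by (rule suminf_ennreal_geometric) auto
  finally show ?thesis .
qed

definition interf_sum :: "(int \<Rightarrow> 'a \<Rightarrow> real) \<Rightarrow> real \<Rightarrow> nat \<Rightarrow> 'a \<Rightarrow> real" where
  "interf_sum a \<tau> N \<omega> = (\<Sum>t\<in>{- int N..int N} - {0}. a t \<omega> * nsinc (real_of_int t - \<tau>))"

lemma interf_eq_lim: "interf a \<tau> \<omega> = lim (\<lambda>N. interf_sum a \<tau> N \<omega>)"
  by (simp add: interf_def interf_sum_def)

lemma summable_block_bound: "summable (\<lambda>k::nat. 8 ^ k * exp (- (2 ^ k / 4)) :: real)"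
proof (rule summable_comparison_test_bigo)
  show "summable (\<lambda>k::nat. norm ((1 / 2 :: real) ^ k))"
    by simp
  show "(\<lambda>k::nat. 8 ^ k * exp (- (2 ^ k / 4)) :: real) \<in> O(\<lambda>k. (1 / 2) ^ k)"
    by real_asymp
qed

locale sinc_interference = prob_space M for M :: "'a measure" +
  fixes a :: "int \<Rightarrow> 'a \<Rightarrow> real" and p \<tau> :: real
  assumes tau_pos: "0 < \<tau>" and tau_less_1: "\<tau> < 1"
    and indep: "indep_vars (\<lambda>_. borel) a (UNIV - {0})"
    and prob_plus: "\<And>t. t \<noteq> 0 \<Longrightarrow> prob {\<omega> \<in> space M. a t \<omega> = 1} = p"
    and prob_minus: "\<And>t. t \<noteq> 0 \<Longrightarrow> prob {\<omega> \<in> space M. a t \<omega> = -1} = 1 - p"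
begin

abbreviation S :: "nat \<Rightarrow> 'a \<Rightarrow> real" where
  "S \<equiv> interf_sum a \<tau>"

definition increment_mean :: "nat \<Rightarrow> nat \<Rightarrow> real" where
  "increment_mean N K = (2 * p - 1) * (\<Sum>t\<in>annulus N K. nsinc (real_of_int t - \<tau>))"

lemma measurable_sign [measurable]: "t \<noteq> 0 \<Longrightarrow> a t \<in> borel_measurable M"
  using indep by (auto simp: indep_vars_def)

lemma AE_sign: "t \<noteq> 0 \<Longrightarrow> AE \<omega> in M. a t \<omega> = 1 \<or> a t \<omega> = -1"
proof -
  assume "t \<noteq> 0"
  then have "prob ({\<omega> \<in> space M. a t \<omega> = 1} \<union> {\<omega> \<in> space M. a t \<omega> = -1}) = 1"
    by (subst finite_measure_Union) (auto simp: prob_plus prob_minus)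
  then have "AE \<omega> in M. \<omega> \<in> {\<omega> \<in> space M. a t \<omega> = 1} \<union> {\<omega> \<in> space M. a t \<omega> = -1}"
    using \<open>t \<noteq> 0\<close> by (intro AE_prob_1) auto
  then show ?thesis
    by eventually_elim auto
qed

lemma AE_abs_signs: "AE \<omega> in M. \<forall>t. t \<noteq> 0 \<longrightarrow> \<bar>a t \<omega>\<bar> = 1"
proof -
  have "AE \<omega> in M. t \<noteq> 0 \<longrightarrow> \<bar>a t \<omega>\<bar> = 1" for t
    by (cases "t = 0") (auto dest!: AE_sign elim!: eventually_mono)
  then show ?thesis
    by (simp add: AE_all_countable)
qed

lemma expectation_sign: "t \<noteq> 0 \<Longrightarrow> expectation (a t) = 2 * p - 1"
proof -
  assume "t \<noteq> 0"
  note [measurable] = measurable_sign[OF this]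
  let ?A = "{\<omega> \<in> space M. a t \<omega> = 1}" and ?B = "{\<omega> \<in> space M. a t \<omega> = -1}"
  have "expectation (a t) = expectation (\<lambda>\<omega>. indicator ?A \<omega> - indicator ?B \<omega>)"
    using AE_sign[OF \<open>t \<noteq> 0\<close>]
    by (intro integral_cong_AE) (auto elim!: eventually_mono simp: indicator_def)
  also have "\<dots> = prob ?A - prob ?B"
    by (subst Bochner_Integration.integral_diff)
       (auto intro!: integrable_real_indicator simp: less_top[symmetric] emeasure_finite)
  finally show ?thesis
    using \<open>t \<noteq> 0\<close> by (simp add: prob_plus prob_minus)
qed

lemma abs_2p_minus_1_le: "\<bar>2 * p - 1\<bar> \<le> 1"
proof -
  have "0 \<le> p" "0 \<le> 1 - p"
    using prob_plus[of 1] prob_minus[of 1] by (metis one_neq_zero measure_nonneg)+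
  then show ?thesis
    by (simp add: abs_le_iff)
qed

lemma measurable_interf_sum [measurable]: "S N \<in> borel_measurable M"
  unfolding interf_sum_def
proof (rule borel_measurable_sum)
  fix t
  assume "t \<in> {- int N..int N} - {0}"
  then have [measurable]: "a t \<in> borel_measurable M"
    by (intro measurable_sign) simp
  show "(\<lambda>\<omega>. a t \<omega> * nsinc (real_of_int t - \<tau>)) \<in> borel_measurable M"
    by measurable
qed

lemma interf_sum_increment:
  assumes "N \<le> K"
  shows "S K \<omega> - S N \<omega> = (\<Sum>t\<in>annulus N K. a t \<omega> * nsinc (real_of_int t - \<tau>))"
proof -
  have "S K \<omega> = S N \<omega> + (\<Sum>t\<in>annulus N K. a t \<omega> * nsinc (real_of_int t - \<tau>))"
    unfolding interf_sum_def symmetric_interval_split(1)[OF assms]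
    by (rule sum.union_disjoint) (use symmetric_interval_split(2)[OF assms] in auto)
  then show ?thesis
    by simp
qed

lemma abs_increment_mean_le:
  assumes "1 \<le> N"
  shows "\<bar>increment_mean N K\<bar> \<le> 1 / real N"
proof -
  have "\<bar>2 * p - 1\<bar> * \<bar>\<Sum>t\<in>annulus N K. nsinc (real_of_int t - \<tau>)\<bar> \<le> 1 * (1 / real N)"
    by (rule mult_mono[OF abs_2p_minus_1_le abs_sum_nsinc_annulus_le[OF tau_pos tau_less_1 assms]]) simp_all
  then show ?thesis
    by (simp add: increment_mean_def abs_mult)
qed

lemma Hoeffding_increment:
  assumes "1 \<le> N" "N < K" "0 \<le> \<epsilon>"
  shows "prob {\<omega> \<in> space M. \<epsilon> \<le> \<bar>S K \<omega> - S N \<omega> - increment_mean N K\<bar>}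
    \<le> 2 * exp (-2 * \<epsilon>\<^sup>2 / (4 * (\<Sum>t\<in>annulus N K. 1 / (real_of_int t)\<^sup>2)))"
proof -
  define D where "D = annulus N K"
  define X where "X t = (\<lambda>\<omega>. a t \<omega> * nsinc (real_of_int t - \<tau>))" for t
  \<comment> \<open>Bounds \<open>\<plusminus>1/|t|\<close> rather than \<open>\<plusminus>|g(t - \<tau>)|\<close> keep the Hoeffding denominator positive
     without knowing that \<open>g\<close> has no zeros.\<close>
  define w where "w t = 1 / \<bar>real_of_int t\<bar>" for t
  have D_large: "2 \<le> \<bar>t\<bar>" "t \<noteq> 0" if "t \<in> D" for t
    using that assms(1) by (auto simp: D_def annulus_def)
  interpret Hoeffding_ineq M D X "\<lambda>t. - w t" w "increment_mean N K"
  proof unfold_locales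
    show "finite D"
      by (simp add: D_def)
    show "indep_vars (\<lambda>_. borel) X D"
      unfolding X_def using annulus_subset
      by (intro indep_vars_compose2[OF indep_vars_subset[OF indep]]) (auto simp: D_def)
    show "AE \<omega> in M. X t \<omega> \<in> {- w t..w t}" if "t \<in> D" for t
    proof -
      have "\<bar>nsinc (real_of_int t - \<tau>)\<bar> \<le> w t"
        unfolding w_def using D_large[OF that] by (intro nsinc_shift_abs_le tau_pos tau_less_1) simp
      then show ?thesis
        using AE_sign[OF D_large(2)[OF that]] by (auto simp: X_def abs_le_iff elim!: eventually_mono)
    qed
    have "expectation (X t) = (2 * p - 1) * nsinc (real_of_int t - \<tau>)" if "t \<in> D" for t
      using D_large[OF that] by (simp add: X_def expectation_sign)
    then show "increment_mean N K \<equiv> \<Sum>t\<in>D. expectation (X t)"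
      by (simp add: increment_mean_def D_def sum_distrib_left)
  qed
  have widths: "(\<Sum>t\<in>D. (w t - - w t)\<^sup>2) = 4 * (\<Sum>t\<in>D. 1 / (real_of_int t)\<^sup>2)"
    by (simp add: w_def sum_distrib_left power2_eq_square)
  have "int (Suc N) \<in> D"
    using assms by (simp add: D_def annulus_def)
  then have "0 < (\<Sum>t\<in>D. (w t - - w t)\<^sup>2)"
    unfolding widths using D_large by (intro mult_pos_pos sum_pos2[where i = "int (Suc N)"]) (auto simp: D_def)
  from Hoeffding_ineq_abs_ge[OF assms(3) this, unfolded widths] show ?thesis
    using assms by (simp add: interf_sum_increment D_def X_def abs_minus_commute)
qed

lemma prob_increment_deviation_le:
  assumes "1 \<le> N" "N < K" "0 \<le> \<epsilon>"
  shows "prob {\<omega> \<in> space M. \<epsilon> \<le> \<bar>S K \<omega> - S N \<omega> - increment_mean N K\<bar>}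
    \<le> 2 * exp (- (real N / 4) * \<epsilon>\<^sup>2)"
proof -
  have "(\<Sum>t\<in>annulus N K. 1 / (real_of_int t)\<^sup>2) \<le> 2 / real N"
    by (rule sum_annulus_inverse_sq_le[OF assms(1)])
  moreover have "0 < (\<Sum>t\<in>annulus N K. 1 / (real_of_int t)\<^sup>2)"
    using assms finite_annulus[of N K] by (intro sum_pos2[where i = "int (Suc N)"]) (auto simp: annulus_def)
  ultimately have "2 * \<epsilon>\<^sup>2 / (4 * (2 / real N)) \<le> 2 * \<epsilon>\<^sup>2 / (4 * (\<Sum>t\<in>annulus N K. 1 / (real_of_int t)\<^sup>2))"
    using assms(1) by (intro divide_left_mono) auto
  then have "2 * exp (-2 * \<epsilon>\<^sup>2 / (4 * (\<Sum>t\<in>annulus N K. 1 / (real_of_int t)\<^sup>2)))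
      \<le> 2 * exp (- (real N / 4) * \<epsilon>\<^sup>2)"
    using assms(1) by (simp add: field_simps)
  then show ?thesis
    using Hoeffding_increment[OF assms] by linarith
qed

definition block_deviation :: "nat \<Rightarrow> 'a set" where
  "block_deviation k = (\<Union>m\<in>{8 ^ k <.. 8 ^ (k + 1)}.
    {\<omega> \<in> space M. 1 / 2 ^ k \<le> \<bar>S m \<omega> - S (8 ^ k) \<omega> - increment_mean (8 ^ k) m\<bar>})"

lemma measurable_block_deviation [measurable]: "block_deviation k \<in> sets M"
  unfolding block_deviation_def by measurable

lemma prob_block_deviation_le: "prob (block_deviation k) \<le> 16 * (8 ^ k * exp (- (2 ^ k / 4)))"
proof -
  have "(8::real) ^ k = 2 ^ k * (2 ^ k)\<^sup>2"
    by (simp add: power2_eq_square flip: power_mult_distrib)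
  then have exponent: "- (real (8 ^ k) / 4) * (1 / 2 ^ k)\<^sup>2 = - (2 ^ k / 4)"
    by (simp add: power_divide)
  have "prob (block_deviation k) \<le> (\<Sum>m\<in>{(8::nat) ^ k <.. 8 ^ (k + 1)}. 2 * exp (- (2 ^ k / 4)))"
    unfolding block_deviation_def
  proof (rule order_trans[OF finite_measure_subadditive_finite sum_mono])
    show "prob {\<omega> \<in> space M. 1 / 2 ^ k \<le> \<bar>S m \<omega> - S (8 ^ k) \<omega> - increment_mean (8 ^ k) m\<bar>}
        \<le> 2 * exp (- (2 ^ k / 4))" if "m \<in> {(8::nat) ^ k <.. 8 ^ (k + 1)}" for m
      using prob_increment_deviation_le[of "8 ^ k" m "1 / 2 ^ k", unfolded exponent] that by simp
  qed auto
  also have "\<dots> \<le> 8 ^ (k + 1) * (2 * exp (- (2 ^ k / 4)))"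
    by (simp add: mult_right_mono)
  finally show ?thesis
    by simp
qed

lemma AE_interf_sum_tendsto: "AE \<omega> in M. (\<lambda>N. S N \<omega>) \<longlonglongrightarrow> interf a \<tau> \<omega>"
proof -
  have "summable (\<lambda>k. prob (block_deviation k))"
    using prob_block_deviation_le
    by (intro summable_comparison_test'[OF summable_mult[OF summable_block_bound, of 16]]) auto
  then have "AE \<omega> in M. eventually (\<lambda>k. \<omega> \<in> space M - block_deviation k) sequentially"
    by (intro borel_cantelli_AE1) (auto simp: emeasure_eq_measure)
  then show ?thesis
  proof eventually_elim
    case (elim \<omega>)
    then obtain k0 where k0: "\<And>k. k0 \<le> k \<Longrightarrow> \<omega> \<in> space M - block_deviation k"
      by (auto simp: eventually_sequentially)
    have blocks: "\<bar>S m \<omega> - S (8 ^ k) \<omega>\<bar> \<le> 2 / 2 ^ k"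
      if "k0 \<le> k" "8 ^ k \<le> m" "m \<le> 8 ^ (k + 1)" for k m
    proof (cases "m = 8 ^ k")
      case False
      then have "\<bar>S m \<omega> - S (8 ^ k) \<omega> - increment_mean (8 ^ k) m\<bar> < 1 / 2 ^ k"
        using k0[OF that(1)] that by (auto simp: block_deviation_def not_le)
      moreover have "\<bar>increment_mean (8 ^ k) m\<bar> \<le> 1 / real (8 ^ k)"
        by (rule abs_increment_mean_le) simp
      moreover have "1 / real (8 ^ k) \<le> 1 / 2 ^ k"
        using power_mono[of "2::real" 8 k] by (intro frac_le) auto
      ultimately show ?thesis
        by linarith
    qed simp
    have "Cauchy (\<lambda>N. S N \<omega>)"
      by (rule Cauchy_of_geometric_blocks[where b = 8, OF _ blocks]) simp_all
    then show ?case
      by (simp add: Cauchy_convergent_iff convergent_LIMSEQ_iff interf_eq_lim)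
  qed
qed

lemma measurable_interf [measurable]: "interf a \<tau> \<in> borel_measurable M"
  unfolding interf_eq_lim[abs_def] by (rule borel_measurable_lim_metric) simp

lemma AE_abs_interf_sum_le: "AE \<omega> in M. \<bar>S N \<omega>\<bar> \<le> (\<Sum>t\<in>{- int N..int N} - {0}. \<bar>nsinc (real_of_int t - \<tau>)\<bar>)"
  using AE_abs_signs
  by eventually_elim (auto simp: interf_sum_def abs_mult intro!: order_trans[OF sum_abs] sum_mono)

lemma nn_integral_exp_sq_interf_sum_le:
  assumes "0 \<le> l" "1 \<le> N" "4 * l + 1 \<le> real N / 4" "N < K"
  defines "B \<equiv> (\<Sum>t\<in>{- int N..int N} - {0}. \<bar>nsinc (real_of_int t - \<tau>)\<bar>) + 1"
  shows "(\<integral>\<^sup>+\<omega>. exp (l * S K \<omega> ^ 2) \<partial>M) \<le> ennreal (exp (2 * l * B\<^sup>2) * (2 * exp (4 * l) / (1 - exp (- 1))))"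
proof -
  define X where "X \<omega> = S K \<omega> - S N \<omega> - increment_mean N K" for \<omega>
  have [measurable]: "X \<in> borel_measurable M"
    unfolding X_def by measurable
  have "\<bar>increment_mean N K\<bar> \<le> 1"
    by (rule order_trans[OF abs_increment_mean_le[OF \<open>1 \<le> N\<close>]]) (use \<open>1 \<le> N\<close> in simp)
  have AE_bound: "AE \<omega> in M. exp (l * S K \<omega> ^ 2) \<le> exp (2 * l * B\<^sup>2) * exp (2 * l * X \<omega> ^ 2)"
    using AE_abs_interf_sum_le[of N]
  proof eventually_elim
    case (elim \<omega>)
    then have "\<bar>S N \<omega> + increment_mean N K\<bar> \<le> \<bar>B\<bar>"
      using \<open>\<bar>increment_mean N K\<bar> \<le> 1\<close> unfolding B_def by linarith
    then have "S K \<omega> ^ 2 \<le> 2 * B\<^sup>2 + 2 * X \<omega> ^ 2"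
      using square_add_le[of "S N \<omega> + increment_mean N K" "X \<omega>"] by (simp add: X_def abs_le_square_iff)
    then have "l * S K \<omega> ^ 2 \<le> 2 * l * B\<^sup>2 + 2 * l * X \<omega> ^ 2"
      using mult_left_mono[OF _ \<open>0 \<le> l\<close>] by (fastforce simp: algebra_simps)
    then show ?case
      by (simp flip: exp_add)
  qed
  have tail_integral: "(\<integral>\<^sup>+\<omega>. exp ((2 * l) * X \<omega> ^ 2) \<partial>M) \<le> ennreal (2 * exp (2 * (2 * l)) / (1 - exp (- 1)))"
  proof (rule nn_integral_exp_sq_le_of_tail)
    show "prob {\<omega> \<in> space M. real k \<le> \<bar>X \<omega>\<bar>} \<le> 2 * exp (- (real N / 4) * (real k)\<^sup>2)" for k
      unfolding X_def using prob_increment_deviation_le[OF \<open>1 \<le> N\<close> \<open>N < K\<close>, of "real k"] by simp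
  qed (use assms in auto)
  have "(\<integral>\<^sup>+\<omega>. exp (l * S K \<omega> ^ 2) \<partial>M) \<le> (\<integral>\<^sup>+\<omega>. ennreal (exp (2 * l * B\<^sup>2)) * exp (2 * l * X \<omega> ^ 2) \<partial>M)"
    using AE_bound by (intro nn_integral_mono_AE) (auto elim!: eventually_mono simp: ennreal_mult'[symmetric] ennreal_leI)
  also have "\<dots> = ennreal (exp (2 * l * B\<^sup>2)) * (\<integral>\<^sup>+\<omega>. exp ((2 * l) * X \<omega> ^ 2) \<partial>M)"
    by (simp add: nn_integral_cmult)
  also have "\<dots> \<le> ennreal (exp (2 * l * B\<^sup>2)) * ennreal (2 * exp (2 * (2 * l)) / (1 - exp (- 1)))"
    using tail_integral by (rule mult_left_mono) simp
  also have "\<dots> = ennreal (exp (2 * l * B\<^sup>2) * (2 * exp (4 * l) / (1 - exp (- 1))))"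
    by (simp add: ennreal_mult''[symmetric])
  finally show ?thesis .
qed

lemma integrable_exp_sq_interf:
  assumes "0 \<le> l"
  shows "integrable M (\<lambda>\<omega>. exp (l * interf a \<tau> \<omega> ^ 2))"
proof -
  define N where "N = nat \<lceil>16 * l\<rceil> + 4"
  have "16 * l \<le> real (nat \<lceil>16 * l\<rceil>)"
    by linarith
  then obtain C where bound: "\<And>K. N < K \<Longrightarrow> (\<integral>\<^sup>+\<omega>. exp (l * S K \<omega> ^ 2) \<partial>M) \<le> ennreal C"
    using nn_integral_exp_sq_interf_sum_le[OF assms, of N] by (force simp: N_def)
  have "AE \<omega> in M. (\<lambda>K. ennreal (exp (l * S K \<omega> ^ 2))) \<longlonglongrightarrow> ennreal (exp (l * interf a \<tau> \<omega> ^ 2))"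
    using AE_interf_sum_tendsto by eventually_elim (intro tendsto_intros)
  then have "(\<integral>\<^sup>+\<omega>. exp (l * interf a \<tau> \<omega> ^ 2) \<partial>M) = (\<integral>\<^sup>+\<omega>. liminf (\<lambda>K. ennreal (exp (l * S K \<omega> ^ 2))) \<partial>M)"
    by (intro nn_integral_cong_AE)
       (auto elim!: eventually_mono intro: lim_imp_Liminf[symmetric, OF trivial_limit_sequentially])
  also have "\<dots> \<le> liminf (\<lambda>K. \<integral>\<^sup>+\<omega>. exp (l * S K \<omega> ^ 2) \<partial>M)"
    by (rule nn_integral_liminf) measurable
  also have "\<dots> \<le> ennreal C"
    using bound by (intro Liminf_le) (auto simp: eventually_sequentially intro!: exI[of _ "Suc N"])
  finally have "(\<integral>\<^sup>+\<omega>. exp (l * interf a \<tau> \<omega> ^ 2) \<partial>M) < \<infinity>"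
    using ennreal_less_top le_less_trans by (metis infinity_ennreal_def)
  then show ?thesis
    by (intro integrableI_bounded) simp_all
qed

end

theorem lemma2:
  fixes M :: "'a measure" and a :: "int \<Rightarrow> 'a \<Rightarrow> real"
    and p \<tau> \<sigma> :: real
  assumes "prob_space M"
    and "0 \<le> p" "p \<le> 1" "0 < \<tau>" "\<tau> < 1" "0 < \<sigma>"
    and "prob_space.indep_vars M (\<lambda>_. borel) a (UNIV - {0})"
    and "\<And>t. t \<noteq> 0 \<Longrightarrow> measure M {\<omega>\<in>space M. a t \<omega> = 1} = p"
    and "\<And>t. t \<noteq> 0 \<Longrightarrow> measure M {\<omega>\<in>space M. a t \<omega> = -1} = 1 - p"
  defines "I \<equiv> interf a \<tau>"
  defines "\<mu> \<equiv> integral\<^sup>L M I"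
  defines "\<mu>j \<equiv> (\<lambda>j::nat. integral\<^sup>L M (\<lambda>\<omega>. (I \<omega> - \<mu>) ^ j))"
  defines "g \<equiv> nsinc"
  shows "summable (\<lambda>n. \<Sum>k\<le>2*n+1. \<Sum>j\<le>k.
            real (odd_dfact n) * g \<tau> ^ (2*n+1-k) * (-1) ^ (n+k) * \<mu>j j * \<mu> ^ (k-j)
            / (\<sigma> ^ (2*n) * fact (2*n+1-k) * fact j * fact (k-j)))
       \<and> integral\<^sup>L M (\<lambda>\<omega>. gaussQ ((g \<tau> - I \<omega>) / \<sigma>))
          = 1/2 - 1 / (sqrt (2*pi) * \<sigma>) * (\<Sum>n. \<Sum>k\<le>2*n+1. \<Sum>j\<le>k.
            real (odd_dfact n) * g \<tau> ^ (2*n+1-k) * (-1) ^ (n+k) * \<mu>j j * \<mu> ^ (k-j)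
            / (\<sigma> ^ (2*n) * fact (2*n+1-k) * fact j * fact (k-j)))
       \<and> summable (\<lambda>n. \<Sum>k\<le>2*n+1. \<Sum>j\<le>k.
            real (odd_dfact n) * g \<tau> ^ (2*n+1-k) * (-1) ^ n * \<mu>j j * \<mu> ^ (k-j)
            / (\<sigma> ^ (2*n) * fact (2*n+1-k) * fact j * fact (k-j)))
       \<and> integral\<^sup>L M (\<lambda>\<omega>. gaussQ ((g \<tau> + I \<omega>) / \<sigma>))
          = 1/2 - 1 / (sqrt (2*pi) * \<sigma>) * (\<Sum>n. \<Sum>k\<le>2*n+1. \<Sum>j\<le>k.
            real (odd_dfact n) * g \<tau> ^ (2*n+1-k) * (-1) ^ n * \<mu>j j * \<mu> ^ (k-j)
            / (\<sigma> ^ (2*n) * fact (2*n+1-k) * fact j * fact (k-j)))"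
proof -
  interpret sinc_interference M a p \<tau>
    by (intro sinc_interference.intro sinc_interference_axioms.intro assms(1,4,5,7-9))
  have I_measurable: "I \<in> borel_measurable M"
    unfolding I_def by (rule measurable_interf)
  have exp_sq: "\<And>l. 0 \<le> l \<Longrightarrow> integrable M (\<lambda>\<omega>. exp (l * I \<omega> ^ 2))"
    unfolding I_def by (rule integrable_exp_sq_interf)
  have minus: "(\<lambda>n. \<Sum>k\<le>2*n+1. \<Sum>j\<le>k.
            real (odd_dfact n) * g \<tau> ^ (2*n+1-k) * (-1) ^ (n+k) * \<mu>j j * \<mu> ^ (k-j)
            / (\<sigma> ^ (2*n) * fact (2*n+1-k) * fact j * fact (k-j)))
      sums (sqrt (2 * pi) * \<sigma> * (1 / 2 - integral\<^sup>L M (\<lambda>\<omega>. gaussQ ((g \<tau> - I \<omega>) / \<sigma>))))"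
    using expectation_gaussQ_affine_sums[OF I_measurable exp_sq \<open>0 < \<sigma>\<close>, of "g \<tau>" "-1" \<mu>]
    by (simp add: \<mu>j_def power_add mult.assoc)
  have plus: "(\<lambda>n. \<Sum>k\<le>2*n+1. \<Sum>j\<le>k.
            real (odd_dfact n) * g \<tau> ^ (2*n+1-k) * (-1) ^ n * \<mu>j j * \<mu> ^ (k-j)
            / (\<sigma> ^ (2*n) * fact (2*n+1-k) * fact j * fact (k-j)))
      sums (sqrt (2 * pi) * \<sigma> * (1 / 2 - integral\<^sup>L M (\<lambda>\<omega>. gaussQ ((g \<tau> + I \<omega>) / \<sigma>))))"
    using expectation_gaussQ_affine_sums[OF I_measurable exp_sq \<open>0 < \<sigma>\<close>, of "g \<tau>" 1 \<mu>]
    by (simp add: \<mu>j_def)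
  have cancel: "1 / 2 - 1 / (sqrt (2 * pi) * \<sigma>) * (sqrt (2 * pi) * \<sigma> * (1 / 2 - x)) = x" for x
    using \<open>0 < \<sigma>\<close> by simp
  show ?thesis
    using sums_summable[OF minus] sums_summable[OF plus]
    unfolding sums_unique[OF minus, symmetric] sums_unique[OF plus, symmetric] cancel by simp
qed

end
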